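(* Let $(S,|\cdot|)$ be a finite metric space with $n$ points, $t\ge1$, $G'=(S,E')$ a $t$-spanner for $S$, $f$ an integer with $1\le f\le (n-1)/2$, and $G=(S,E)$ the graph obtained from $G'$ by the construction in the context. Let $F\subseteq E$ be such that $(S,F)$ has maximum degree at most $f$. Let $p,q$ be distinct points of $S$ and let $P'$ be a shortest path between $p$ and $q$ in $G'$. If $P'$ has at least $2f+2$ vertices, then $\delta_{G\setminus F}(p,q)\le (8f+2)\,|P'|$, where $|P'|$ is the length of $P'$.
   Context: All graphs on $S$ have edge weights $|pq|$; the length of a path is the sum of its edge weights and $\delta_X(p,q)$ is the shortest-path distance in $X$. A graph $G'=(S,E')$ is a $t$-spanner for $S$ if $\delta_{G'}(p,q)\le t|pq|$ for all $p,q$. $G\setminus F$ is the graph with vertex set $S$ and edge set $E\setminus F$. Construction: for each edge $\{a,b\}\in E'$, list the points of $S\setminus\{a,b\}$ as $c_1,\dots,c_{n-2}$ in non-decreasing order of $|ac_i|+|c_ib|$ (ties broken arbitrarily) and let $C_{ab}=\{c_1,\dots,c_{2f-1}\}$. The graph $G=(S,E)$ has edge set $E=E'\cup\{\{a,c\},\{c,b\}:\{a,b\}\in E',\ c\in C_{ab}\}$. *)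

theory Defs
  imports "HOL-Analysis.Analysis" "HOL-Library.Extended_Real"
begin

definition graph_edges :: "'a set \<Rightarrow> 'a set set \<Rightarrow> bool" where
  "graph_edges S E \<longleftrightarrow> (\<forall>e\<in>E. \<exists>a b. e = {a,b} \<and> a \<in> S \<and> b \<in> S \<and> a \<noteq> b)"

definition is_path :: "'a set \<Rightarrow> 'a set set \<Rightarrow> 'a list \<Rightarrow> 'a \<Rightarrow> 'a \<Rightarrow> bool" where
  "is_path S E P p q \<longleftrightarrow> P \<noteq> [] \<and> hd P = p \<and> last P = q \<and> distinct P \<and> set P \<subseteq> S \<and>
     (\<forall>i < length P - 1. {P ! i, P ! Suc i} \<in> E)"

definition path_len :: "('a::metric_space) list \<Rightarrow> real" where
  "path_len P = sum_list (map (\<lambda>(x,y). dist x y) (zip P (tl P)))"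

text \<open>Shortest-path distance (infinite if no path exists).\<close>
definition delta :: "('a::metric_space) set \<Rightarrow> 'a set set \<Rightarrow> 'a \<Rightarrow> 'a \<Rightarrow> ereal" where
  "delta S E p q = (INF P \<in> {P. is_path S E P p q}. ereal (path_len P))"

definition is_spanner :: "real \<Rightarrow> ('a::metric_space) set \<Rightarrow> 'a set set \<Rightarrow> bool" where
  "is_spanner t S E' \<longleftrightarrow> graph_edges S E' \<and>
     (\<forall>p\<in>S. \<forall>q\<in>S. delta S E' p q \<le> ereal (t * dist p q))"

text \<open>C is a valid choice of the sets C_ab: for each edge {a,b}, C {a,b} consists of the first
  2f-1 points of S - {a,b} in some non-decreasing order of |ac|+|cb| (ties broken arbitrarily).\<close>
definition valid_C :: "nat \<Rightarrow> ('a::metric_space) set \<Rightarrow> 'a set set \<Rightarrow> ('a set \<Rightarrow> 'a set) \<Rightarrow> bool" where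
  "valid_C f S E' C \<longleftrightarrow> (\<forall>a b. {a,b} \<in> E' \<longrightarrow>
      C {a,b} \<subseteq> S - {a,b} \<and> card (C {a,b}) = 2*f - 1 \<and>
      (\<forall>c\<in>C {a,b}. \<forall>d\<in>S - {a,b} - C {a,b}. dist a c + dist c b \<le> dist a d + dist d b))"

definition constr_edges :: "'a set set \<Rightarrow> ('a set \<Rightarrow> 'a set) \<Rightarrow> 'a set set" where
  "constr_edges E' C = E' \<union> {e. \<exists>a b c. {a,b} \<in> E' \<and> c \<in> C {a,b} \<and> (e = {a,c} \<or> e = {c,b})}"

definition max_degree_le :: "'a set \<Rightarrow> 'a set set \<Rightarrow> nat \<Rightarrow> bool" where
  "max_degree_le S F f \<longleftrightarrow> (\<forall>v\<in>S. card {e\<in>F. v \<in> e} \<le> f)"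

end

theory Submission
  imports Defs
begin

text \<open>If F deletes an edge ab of P', it cannot also cut, for every c in C_ab, one of the edges
  ac, cb: that would need 2f - 1 further edges of F at a or at b besides ab. So ab is bypassed by
  a surviving detour a, c, b. Among the 2f vertices of P' other than a, b that lie at most 2f steps
  from the edge ab, one is not in C_ab, and c is no worse than it; hence the detour is at most
  twice the length of the window of P' formed by the edges within 2f steps of ab. Every edge of P'
  lies in at most 4f + 1 windows.\<close>

fun is_walk :: "'a set set \<Rightarrow> 'a list \<Rightarrow> bool" where
  "is_walk E (x # y # r) \<longleftrightarrow> {x, y} \<in> E \<and> is_walk E (y # r)"
| "is_walk E _ \<longleftrightarrow> True"

lemma path_len_Nil [simp]: "path_len [] = 0"
  and path_len_singleton [simp]: "path_len [x] = 0"
  and path_len_Cons_Cons [simp]: "path_len (x # y # r) = dist x y + path_len (y # r)"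
  by (simp_all add: path_len_def)

lemma path_len_nonneg: "path_len W \<ge> 0"
  by (induction W rule: induct_list012) auto

lemma path_len_append: "path_len (xs @ y # r) = path_len (xs @ [y]) + path_len (y # r)"
  by (induction xs rule: induct_list012) auto

lemma is_walk_append: "is_walk E (xs @ y # r) \<longleftrightarrow> is_walk E (xs @ [y]) \<and> is_walk E (y # r)"
  by (induction xs rule: induct_list012) auto

lemma is_walk_iff_nth: "is_walk E W \<longleftrightarrow> (\<forall>i < length W - 1. {W ! i, W ! Suc i} \<in> E)"
  by (induction E W rule: is_walk.induct) (auto simp: All_less_Suc2)

lemma path_len_conv_sum: "path_len P = (\<Sum>i < length P - 1. dist (P ! i) (P ! Suc i))"
  by (induction P rule: induct_list012) (simp_all add: sum.lessThan_Suc_shift del: sum.lessThan_Suc)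

definition walk_between :: "'a set \<Rightarrow> 'a set set \<Rightarrow> 'a list \<Rightarrow> 'a \<Rightarrow> 'a \<Rightarrow> bool" where
  "walk_between S E W u v \<longleftrightarrow> is_walk E W \<and> W \<noteq> [] \<and> hd W = u \<and> last W = v \<and> set W \<subseteq> S"

lemma walk_between_append:
  assumes "walk_between S E V u v" "walk_between S E W v w"
  shows "walk_between S E (V @ tl W) u w" "path_len (V @ tl W) = path_len V + path_len W"
proof -
  obtain V0 where V: "V = V0 @ [v]"
    using assms(1) unfolding walk_between_def by (metis append_butlast_last_id)
  obtain W0 where W: "W = v # W0"
    using assms(2) unfolding walk_between_def by (metis list.collapse)
  show "walk_between S E (V @ tl W) u w"
    using assms is_walk_append[of E V0 v W0] unfolding V W walk_between_def
    by (cases V0; cases W0) auto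
  show "path_len (V @ tl W) = path_len V + path_len W"
    using path_len_append[of V0 v W0] unfolding V W by simp
qed

lemma walk_shortcut_to_path:
  assumes "walk_between S E W u v"
  shows "\<exists>P. is_path S E P u v \<and> path_len P \<le> path_len W"
  using assms
proof (induction "length W" arbitrary: W rule: less_induct)
  case less
  show ?case
  proof (cases "distinct W")
    case True
    then have "is_path S E W u v"
      using less.prems unfolding is_path_def walk_between_def is_walk_iff_nth[symmetric] by simp
    then show ?thesis by blast
  next
    case False
    then obtain xs ys zs y where W: "W = xs @ [y] @ ys @ [y] @ zs"
      using not_distinct_decomp by blast
    define W' where "W' = xs @ y # zs"
    have "is_walk E W'"
      using less.prems is_walk_append[of E xs y "ys @ y # zs"] is_walk_append[of E "y # ys" y zs]
        is_walk_append[of E xs y zs]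
      unfolding W W'_def walk_between_def by auto
    moreover have "hd W' = hd W" "last W' = last W"
      unfolding W W'_def by (cases xs; simp) (cases zs; simp)
    ultimately have "walk_between S E W' u v"
      using less.prems unfolding W'_def walk_between_def W by auto
    moreover have "path_len W' \<le> path_len W"
      using path_len_append[of xs y "ys @ y # zs"] path_len_append[of "y # ys" y zs]
        path_len_append[of xs y zs] path_len_nonneg[of "y # ys @ [y]"]
      unfolding W W'_def by simp
    moreover have "length W' < length W"
      unfolding W W'_def by simp
    ultimately show ?thesis
      using less.hyps[of W'] by fastforce
  qed
qed

lemma delta_le_walk:
  assumes "walk_between S E W u v"
  shows "delta S E u v \<le> ereal (path_len W)"
proof -
  obtain P where "is_path S E P u v" "path_len P \<le> path_len W"
    using walk_shortcut_to_path[OF assms] by blast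
  then show ?thesis
    unfolding delta_def by (meson INF_lower2 ereal_less_eq(3) mem_Collect_eq)
qed

lemma walk_through_points:
  fixes x :: "nat \<Rightarrow> 'a::metric_space"
  assumes "x 0 \<in> S"
    and "\<And>i. i < k \<Longrightarrow> \<exists>W. walk_between S E W (x i) (x (Suc i)) \<and> path_len W \<le> b i"
  shows "\<exists>W. walk_between S E W (x 0) (x k) \<and> path_len W \<le> (\<Sum>i<k. b i)"
  using assms(2)
proof (induction k)
  case 0
  have "walk_between S E [x 0] (x 0) (x 0)"
    using assms(1) unfolding walk_between_def by simp
  then show ?case by force
next
  case (Suc k)
  then obtain V W where "walk_between S E V (x 0) (x k)" "path_len V \<le> (\<Sum>i<k. b i)"
    and "walk_between S E W (x k) (x (Suc k))" "path_len W \<le> b k"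
    by (meson less_Suc_eq)
  then show ?case
    using walk_between_append[of S E V "x 0" "x k" W "x (Suc k)"] by (intro exI[of _ "V @ tl W"]) simp
qed

lemma dist_le_sum_steps:
  fixes x :: "nat \<Rightarrow> 'a::metric_space"
  shows "m \<le> n \<Longrightarrow> dist (x m) (x n) \<le> (\<Sum>e\<in>{m..<n}. dist (x e) (x (Suc e)))"
proof (induction n)
  case (Suc n)
  show ?case
  proof (cases "m = Suc n")
    case False
    then show ?thesis
      using Suc dist_triangle[of "x m" "x (Suc n)" "x n"] by (simp add: dist_commute)
  qed simp
qed simp

lemma dist_le_sum_steps_superset:
  fixes x :: "nat \<Rightarrow> 'a::metric_space"
  assumes "finite A" "{min u v..<max u v} \<subseteq> A"
  shows "dist (x u) (x v) \<le> (\<Sum>e\<in>A. dist (x e) (x (Suc e)))"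
proof -
  have "dist (x (min u v)) (x (max u v)) \<le> (\<Sum>e\<in>{min u v..<max u v}. dist (x e) (x (Suc e)))"
    by (rule dist_le_sum_steps) simp
  also have "\<dots> \<le> (\<Sum>e\<in>A. dist (x e) (x (Suc e)))"
    using assms by (intro sum_mono2) auto
  finally show ?thesis
    by (cases "u \<le> v") (simp_all add: min_def max_def dist_commute)
qed

text \<open>Edge e of a path x_0, ..., x_k joins x_e and x_(e+1); window k r i indexes the edges at
  most r steps away from edge i.\<close>

definition window :: "nat \<Rightarrow> nat \<Rightarrow> nat \<Rightarrow> nat set" where
  "window k r i = {e. e < k \<and> i \<le> e + r \<and> e \<le> i + r}"

lemma finite_window [simp]: "finite (window k r i)"
  unfolding window_def by simp

lemma sum_windows_le:
  fixes w :: "nat \<Rightarrow> real"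
  assumes "\<And>e. w e \<ge> 0"
  shows "(\<Sum>i<k. \<Sum>e\<in>window k r i. w e) \<le> (2 * real r + 1) * (\<Sum>e<k. w e)"
proof -
  define I where "I e = {i. i \<in> {..<k} \<and> i \<le> e + r \<and> e \<le> i + r}" for e
  have "(\<Sum>i<k. \<Sum>e\<in>window k r i. w e) = (\<Sum>e<k. \<Sum>i\<in>I e. w e)"
    unfolding window_def I_def
    using sum.swap_restrict[of "{..<k}" "{..<k}" "\<lambda>i e. w e" "\<lambda>i e. i \<le> e + r \<and> e \<le> i + r"]
    by (simp add: lessThan_def)
  also have "\<dots> \<le> (\<Sum>e<k. (2 * real r + 1) * w e)"
  proof (rule sum_mono)
    fix e
    have "card (I e) \<le> card {e - r..e + r}"
      by (rule card_mono) (auto simp: I_def)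
    also have "\<dots> \<le> 2 * r + 1"
      by simp
    finally have "real (card (I e)) \<le> 2 * real r + 1"
      by linarith
    then show "(\<Sum>i\<in>I e. w e) \<le> (2 * real r + 1) * w e"
      using assms[of e] by (simp add: mult_right_mono)
  qed
  finally show ?thesis
    by (simp add: sum_distrib_left)
qed

lemma card_vertices_near_edge:
  assumes "r + 1 \<le> k" "i < k"
  shows "r \<le> card {j. j \<le> k \<and> j \<noteq> i \<and> j \<noteq> Suc i \<and> i \<le> j + r \<and> j \<le> Suc i + r}"
    (is "_ \<le> card ?J")
proof -
  have fin: "finite ?J"
    by (rule finite_subset[of _ "{..k}"]) auto
  show ?thesis
  proof (cases "Suc i + r \<le> k")
    case True
    have "card {Suc (Suc i)..Suc i + r} \<le> card ?J"
      using True by (intro card_mono[OF fin]) auto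
    then show ?thesis by simp
  next
    case False
    have "{i, Suc i} \<subseteq> {k - r - 1..k}"
      using False assms by auto
    then have "card ({k - r - 1..k} - {i, Suc i}) = r"
      using assms by (simp add: card_Diff_subset)
    moreover have "card ({k - r - 1..k} - {i, Suc i}) \<le> card ?J"
      using False assms by (intro card_mono[OF fin]) auto
    ultimately show ?thesis by simp
  qed
qed

lemma card_incident_edges_lt:
  assumes "finite F" "max_degree_le S F f" "a \<in> S" "{a, b} \<in> F" "a \<notin> K" "b \<notin> K"
  shows "card {c\<in>K. {a, c} \<in> F} < f"
proof -
  let ?A = "{c\<in>K. {a, c} \<in> F}"
  have inj: "inj_on (\<lambda>c. {a, c}) ?A"
    using assms(5) by (auto simp: inj_on_def doubleton_eq_iff)
  have sub: "insert {a, b} ((\<lambda>c. {a, c}) ` ?A) \<subseteq> {e\<in>F. a \<in> e}"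
    using assms(4) by auto
  then have "finite ?A"
    using finite_imageD[OF finite_subset inj] assms(1) by blast
  moreover have "{a, b} \<notin> (\<lambda>c. {a, c}) ` ?A"
    using assms(5,6) by (auto simp: doubleton_eq_iff)
  ultimately have "Suc (card ?A) = card (insert {a, b} ((\<lambda>c. {a, c}) ` ?A))"
    by (simp add: card_image[OF inj])
  also have "\<dots> \<le> card {e\<in>F. a \<in> e}"
    using sub assms(1) by (intro card_mono) auto
  also have "\<dots> \<le> f"
    using assms(2,3) unfolding max_degree_le_def by blast
  finally show ?thesis by simp
qed

lemma edge_or_detour_survives:
  assumes "finite F" "max_degree_le S F f" "1 \<le> f" "valid_C f S E' C"
    and "{a, b} \<in> E'" "a \<in> S" "b \<in> S"
  shows "{a, b} \<notin> F \<or> (\<exists>c\<in>C {a, b}. {a, c} \<notin> F \<and> {c, b} \<notin> F)"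
proof (rule ccontr)
  let ?A = "{c\<in>C {a, b}. {a, c} \<in> F}" and ?B = "{c\<in>C {a, b}. {b, c} \<in> F}"
  assume "\<not> ?thesis"
  then have ab: "{a, b} \<in> F" "{b, a} \<in> F" and cover: "C {a, b} \<subseteq> ?A \<union> ?B"
    by (auto simp: insert_commute)
  have C: "C {a, b} \<subseteq> S - {a, b}" "card (C {a, b}) = 2 * f - 1"
    using assms(4,5) unfolding valid_C_def by blast+
  then have "finite (C {a, b})"
    using assms(3) by (intro card_ge_0_finite) simp
  then have "card (C {a, b}) \<le> card (?A \<union> ?B)"
    using cover by (intro card_mono) auto
  also have "\<dots> \<le> card ?A + card ?B"
    by (rule card_Un_le)
  finally have "card (C {a, b}) \<le> card ?A + card ?B" .
  moreover have "card ?A < f" "card ?B < f"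
    using card_incident_edges_lt[OF assms(1,2)] assms(6,7) ab C(1) by blast+
  ultimately show False
    using C(2) by linarith
qed

lemma valid_C_detour_le_some:
  assumes "valid_C f S E' C" "1 \<le> f" "{a, b} \<in> E'" "c \<in> C {a, b}"
    and "D \<subseteq> S - {a, b}" "2 * f - 1 < card D"
  shows "\<exists>d\<in>D. dist a c + dist c b \<le> dist a d + dist d b"
proof -
  have C: "card (C {a, b}) = 2 * f - 1"
    and better: "\<forall>d\<in>S - {a, b} - C {a, b}. dist a c + dist c b \<le> dist a d + dist d b"
    using assms(1,3,4) unfolding valid_C_def by blast+
  have "finite (C {a, b})"
    using C assms(2) by (intro card_ge_0_finite) simp
  then have "\<not> D \<subseteq> C {a, b}"
    using card_mono[of "C {a, b}" D] C assms(6) by linarith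
  then show ?thesis
    using better assms(5) by blast
qed

lemma detour_le_twice_window:
  fixes x :: "nat \<Rightarrow> 'a::metric_space"
  assumes "valid_C f S E' C" "1 \<le> f" "inj_on x {..k}" "x ` {..k} \<subseteq> S"
    and "2 * f + 1 \<le> k" "i < k" "{x i, x (Suc i)} \<in> E'" "c \<in> C {x i, x (Suc i)}"
  shows "dist (x i) c + dist c (x (Suc i))
           \<le> 2 * (\<Sum>e\<in>window k (2 * f) i. dist (x e) (x (Suc e)))"
proof -
  define J where "J = {j. j \<le> k \<and> j \<noteq> i \<and> j \<noteq> Suc i \<and> i \<le> j + 2 * f \<and> j \<le> Suc i + 2 * f}"
  have J: "J \<subseteq> {..k}"
    unfolding J_def by auto
  have "x ` J \<subseteq> S - {x i, x (Suc i)}"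
  proof
    fix y assume "y \<in> x ` J"
    then obtain j where "j \<in> J" "y = x j" by blast
    then show "y \<in> S - {x i, x (Suc i)}"
      using assms(4,6) inj_onD[OF assms(3), of j] unfolding J_def by auto
  qed
  moreover have "2 * f - 1 < card (x ` J)"
    using card_vertices_near_edge[OF _ assms(6), of "2 * f"] assms(2,5)
      card_image[OF inj_on_subset[OF assms(3) J]]
    unfolding J_def by simp
  ultimately obtain j where j: "j \<in> J"
    and "dist (x i) c + dist c (x (Suc i)) \<le> dist (x i) (x j) + dist (x j) (x (Suc i))"
    using valid_C_detour_le_some[OF assms(1,2,7,8)] by blast
  moreover have "dist (x i) (x j) \<le> (\<Sum>e\<in>window k (2 * f) i. dist (x e) (x (Suc e)))"
    "dist (x j) (x (Suc i)) \<le> (\<Sum>e\<in>window k (2 * f) i. dist (x e) (x (Suc e)))"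
    using j assms(6) unfolding J_def
    by (auto intro!: dist_le_sum_steps_superset simp: window_def)
  ultimately show ?thesis
    by linarith
qed

lemma surviving_walk_along_edge:
  fixes x :: "nat \<Rightarrow> 'a::metric_space"
  assumes "finite F" "max_degree_le S F f" "1 \<le> f" "valid_C f S E' C"
    and "inj_on x {..k}" "x ` {..k} \<subseteq> S" "2 * f + 1 \<le> k" "i < k" "{x i, x (Suc i)} \<in> E'"
  shows "\<exists>W. walk_between S (constr_edges E' C - F) W (x i) (x (Suc i))
           \<and> path_len W \<le> 2 * (\<Sum>e\<in>window k (2 * f) i. dist (x e) (x (Suc e)))"
proof -
  define win where "win = (\<Sum>e\<in>window k (2 * f) i. dist (x e) (x (Suc e)))"
  have xS: "x i \<in> S" "x (Suc i) \<in> S" using assms(6,8) by auto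
  have "dist (x i) (x (Suc i)) \<le> win"
    using dist_le_sum_steps_superset[OF finite_window, of i "Suc i" k "2 * f" i x] assms(8)
    unfolding win_def by (simp add: window_def)
  then have direct: "dist (x i) (x (Suc i)) \<le> 2 * win"
    using zero_le_dist[of "x i" "x (Suc i)"] by linarith
  from edge_or_detour_survives[OF assms(1-4,9) xS]
  have "\<exists>W. walk_between S (constr_edges E' C - F) W (x i) (x (Suc i)) \<and> path_len W \<le> 2 * win"
  proof
    assume "{x i, x (Suc i)} \<notin> F"
    then have "is_walk (constr_edges E' C - F) [x i, x (Suc i)]"
      using assms(9) unfolding constr_edges_def by auto
    then show ?thesis
      using direct xS unfolding walk_between_def by (intro exI[of _ "[x i, x (Suc i)]"]) auto
  next
    assume "\<exists>c\<in>C {x i, x (Suc i)}. {x i, c} \<notin> F \<and> {c, x (Suc i)} \<notin> F"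
    then obtain c where c: "c \<in> C {x i, x (Suc i)}" "{x i, c} \<notin> F" "{c, x (Suc i)} \<notin> F"
      by blast
    have "c \<in> S" using assms(4,9) c(1) unfolding valid_C_def by blast
    moreover have "is_walk (constr_edges E' C - F) [x i, c, x (Suc i)]"
      using assms(9) c unfolding constr_edges_def by auto
    ultimately show ?thesis
      using detour_le_twice_window[OF assms(4,3,5-9) c(1)] xS unfolding win_def walk_between_def
      by (intro exI[of _ "[x i, c, x (Suc i)]"]) auto
  qed
  then show ?thesis unfolding win_def .
qed

lemma constr_edges_subset_Pow:
  assumes "graph_edges S E'" "valid_C f S E' C"
  shows "constr_edges E' C \<subseteq> Pow S"
proof
  fix e assume "e \<in> constr_edges E' C"
  then consider "e \<in> E'"
    | a b c where "{a, b} \<in> E'" "c \<in> C {a, b}" "e = {a, c} \<or> e = {c, b}"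
    unfolding constr_edges_def by blast
  then show "e \<in> Pow S"
  proof cases
    case 1
    then show ?thesis using assms(1) unfolding graph_edges_def by auto
  next
    case (2 a b c)
    have "{a, b} \<subseteq> S"
      using assms(1) 2(1) unfolding graph_edges_def by (metis empty_subsetI insert_subset)
    moreover have "C {a, b} \<subseteq> S"
      using assms(2) 2(1) unfolding valid_C_def by blast
    ultimately show ?thesis using 2(2,3) by auto
  qed
qed

theorem lemma5:
  fixes S :: "'a::metric_space set" and t :: real and E' F :: "'a set set"
    and f :: nat and C :: "'a set \<Rightarrow> 'a set" and p q :: 'a and P' :: "'a list"
  assumes "finite S"
    and "t \<ge> 1"
    and "is_spanner t S E'"
    and "1 \<le> f" and "2 * f \<le> card S - 1"
    and "valid_C f S E' C"
    and "F \<subseteq> constr_edges E' C"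
    and "max_degree_le S F f"
    and "p \<in> S" and "q \<in> S" and "p \<noteq> q"
    and "is_path S E' P' p q" and "ereal (path_len P') = delta S E' p q"
    and "length P' \<ge> 2 * f + 2"
  shows "delta S (constr_edges E' C - F) p q \<le> ereal ((8 * real f + 2) * path_len P')"
proof -
  define k where "k = length P' - 1"
  define x where "x = (!) P'"
  define E where "E = constr_edges E' C - F"
  have P': "P' \<noteq> []" "hd P' = p" "last P' = q" "distinct P'" "set P' \<subseteq> S"
    "\<And>i. i < k \<Longrightarrow> {x i, x (Suc i)} \<in> E'"
    using assms(12) unfolding is_path_def k_def x_def by auto
  have idx: "{..k} = {..<length P'}"
    using P'(1) unfolding k_def by (cases P') (auto simp: lessThan_Suc_atMost)
  have x: "x 0 = p" "x k = q" "inj_on x {..k}" "x ` {..k} \<subseteq> S"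
    using P' unfolding idx by (auto simp: x_def k_def hd_conv_nth last_conv_nth inj_on_nth)
  have "finite F"
    using constr_edges_subset_Pow[of S E' f C] assms(1,3,6,7) unfolding is_spanner_def
    by (meson finite_Pow_iff finite_subset)
  then have "\<exists>W. walk_between S E W (x i) (x (Suc i))
      \<and> path_len W \<le> 2 * (\<Sum>e\<in>window k (2 * f) i. dist (x e) (x (Suc e)))" if "i < k" for i
    using surviving_walk_along_edge[of F S f E' C x k i] x(3,4) P'(6) that assms(4,6,8,14)
    unfolding E_def k_def by simp
  then obtain W where W: "walk_between S E W p q"
    and len: "path_len W \<le> (\<Sum>i<k. 2 * (\<Sum>e\<in>window k (2 * f) i. dist (x e) (x (Suc e))))"
    using walk_through_points[of x S k E "\<lambda>i. 2 * (\<Sum>e\<in>window k (2 * f) i. dist (x e) (x (Suc e)))"]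
      x(1,2) assms(9) by blast
  have "path_len W \<le> 2 * ((2 * real (2 * f) + 1) * (\<Sum>e<k. dist (x e) (x (Suc e))))"
    using len sum_windows_le[of "\<lambda>e. dist (x e) (x (Suc e))" k "2 * f"]
    by (simp add: sum_distrib_left[symmetric])
  also have "\<dots> = (8 * real f + 2) * path_len P'"
    by (simp add: path_len_conv_sum x_def k_def algebra_simps)
  finally have "ereal (path_len W) \<le> ereal ((8 * real f + 2) * path_len P')"
    by simp
  moreover have "delta S E p q \<le> ereal (path_len W)"
    using delta_le_walk[OF W] .
  ultimately show ?thesis
    unfolding E_def by (rule order_trans[rotated])
qed

end
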